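(* Let $P$ be a computable probability measure on the binary tree, and let $H(0\mid x)$ denote the best-explanation prediction defined in the context. Then \[ \sum_{x\in\{0,1\}^*} P(x)\,\bigl[P(0\mid x)-H(0\mid x)\bigr]^2<\infty . \] Moreover, this sum is bounded by $O\bigl(K(P)\,2^{1.5K(P)}\bigr)$, where the constant in the $O(\cdot)$ does not depend on $P$.
   Context: A measure (distribution) on the binary tree is a function $P:\{0,1\}^*\to\mathbb{R}_{\ge 0}$ with rational values such that $P(\Lambda)=1$ for the empty word $\Lambda$ and $P(x0)+P(x1)=P(x)$ for every string $x$. It is computable if some algorithm outputs $P(x)$ on input $x$. Conditional probabilities are $P(b\mid x)=P(xb)/P(x)$ for $b\in\{0,1\}$; terms with $P(x)=0$ have weight zero in the sum. $K$ denotes prefix (Kolmogorov) complexity. For a computable measure $Q$, $K(Q)$ is the prefix complexity of $Q$, i.e. the minimal prefix complexity of a program computing $Q$. All logarithms are binary. For a string $x$, a best explanation of $x$ is a computable measure $Q$ minimizing $3K(Q)-\log Q(x)$ over all computable measures; if there are several minimizers, any one is chosen. The prediction is $H(b\mid x)=Q(xb)/Q(x)$, where $Q$ is the chosen best explanation of $x$. *)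

theory Defs
  imports "HOL-Analysis.Analysis" "HOL-Library.Nat_Bijection"
begin

datatype recf = Zero | Succ | Proj nat | Comp recf "recf list" | Prim recf recf | Mn recf

inductive eval :: "recf \<Rightarrow> nat list \<Rightarrow> nat \<Rightarrow> bool" where
  eval_Zero: "eval Zero xs 0"
| eval_Succ: "eval Succ (x # xs) (Suc x)"
| eval_Proj: "i < length xs \<Longrightarrow> eval (Proj i) xs (xs ! i)"
| eval_Comp: "list_all2 (\<lambda>g y. eval g xs y) gs ys \<Longrightarrow> eval f ys z \<Longrightarrow> eval (Comp f gs) xs z"
| eval_Prim0: "eval f xs z \<Longrightarrow> eval (Prim f g) (0 # xs) z"
| eval_PrimS: "eval (Prim f g) (n # xs) y \<Longrightarrow> eval g (n # y # xs) z \<Longrightarrow> eval (Prim f g) (Suc n # xs) z"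
| eval_Mn: "eval f (n # xs) 0 \<Longrightarrow> (\<forall>m<n. \<exists>y. eval f (m # xs) (Suc y)) \<Longrightarrow> eval (Mn f) xs n"
monos list.rel_mono

fun recf_encode :: "recf \<Rightarrow> nat" where
  "recf_encode Zero = prod_encode (0, 0)"
| "recf_encode Succ = prod_encode (1, 0)"
| "recf_encode (Proj i) = prod_encode (2, i)"
| "recf_encode (Comp f gs) = prod_encode (3, prod_encode (recf_encode f, list_encode (map recf_encode gs)))"
| "recf_encode (Prim f g) = prod_encode (4, prod_encode (recf_encode f, recf_encode g))"
| "recf_encode (Mn f) = prod_encode (5, recf_encode f)"

text \<open>Bijective base-2 encoding of binary strings (False = 0, True = 1).\<close>
fun bin_encode :: "bool list \<Rightarrow> nat" where
  "bin_encode [] = 0"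
| "bin_encode (b # bs) = 2 * bin_encode bs + (if b then 2 else 1)"

definition rat_encode :: "rat \<Rightarrow> nat" where
  "rat_encode q = prod_encode (int_encode (fst (quotient_of q)), nat (snd (quotient_of q)))"

definition prefix_free :: "bool list set \<Rightarrow> bool" where
  "prefix_free D \<longleftrightarrow> (\<forall>p\<in>D. \<forall>q\<in>D. (\<exists>r. q = p @ r) \<longrightarrow> p = q)"

definition prefix_machine :: "(bool list \<Rightarrow> nat option) \<Rightarrow> bool" where
  "prefix_machine M \<longleftrightarrow>
     (\<exists>e. \<forall>p y. M p = Some y \<longleftrightarrow> eval e [bin_encode p] y) \<and> prefix_free {p. M p \<noteq> None}"

definition optimal_prefix_machine :: "(bool list \<Rightarrow> nat option) \<Rightarrow> bool" where
  "optimal_prefix_machine U \<longleftrightarrow> prefix_machine U \<and>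
     (\<forall>M. prefix_machine M \<longrightarrow>
        (\<exists>c. \<forall>p y. M p = Some y \<longrightarrow> (\<exists>q. U q = Some y \<and> length q \<le> length p + c)))"

definition is_measure :: "(bool list \<Rightarrow> rat) \<Rightarrow> bool" where
  "is_measure P \<longleftrightarrow> P [] = 1 \<and> (\<forall>x. P x \<ge> 0) \<and> (\<forall>x. P (x @ [False]) + P (x @ [True]) = P x)"

definition computes :: "recf \<Rightarrow> (bool list \<Rightarrow> rat) \<Rightarrow> bool" where
  "computes e Q \<longleftrightarrow> (\<forall>x. eval e [bin_encode x] (rat_encode (Q x)))"

definition computable_measure :: "(bool list \<Rightarrow> rat) \<Rightarrow> bool" where
  "computable_measure Q \<longleftrightarrow> is_measure Q \<and> (\<exists>e. computes e Q)"

definition Kmeas :: "(bool list \<Rightarrow> nat option) \<Rightarrow> (bool list \<Rightarrow> rat) \<Rightarrow> nat" where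
  "Kmeas U Q = (LEAST k. \<exists>e p. computes e Q \<and> U p = Some (recf_encode e) \<and> length p = k)"

text \<open>Best explanation of x: a computable measure minimising 3K(Q) - log Q(x)
  (measures with Q(x) = 0 have value +infinity and are never minimisers).\<close>
definition best_explanation :: "(bool list \<Rightarrow> nat option) \<Rightarrow> bool list \<Rightarrow> (bool list \<Rightarrow> rat) \<Rightarrow> bool" where
  "best_explanation U x Q \<longleftrightarrow> computable_measure Q \<and> Q x > 0 \<and>
     (\<forall>Q'. computable_measure Q' \<and> Q' x > 0 \<longrightarrow>
        3 * real (Kmeas U Q) - log 2 (real_of_rat (Q x))
          \<le> 3 * real (Kmeas U Q') - log 2 (real_of_rat (Q' x)))"

text \<open>Prediction H(0|x) given a selection Qs of best explanations (Qs x is the chosen one for x).\<close>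
definition pred0 :: "(bool list \<Rightarrow> bool list \<Rightarrow> rat) \<Rightarrow> bool list \<Rightarrow> real" where
  "pred0 Qs x = real_of_rat (Qs x (x @ [False])) / real_of_rat (Qs x x)"

definition cond0 :: "(bool list \<Rightarrow> rat) \<Rightarrow> bool list \<Rightarrow> real" where
  "cond0 P x = real_of_rat (P (x @ [False])) / real_of_rat (P x)"

end

theory Submission
  imports Defs
begin

(* If Q is the best explanation of x, comparing 3 K(Q) - log Q(x) with the value
   3 K(P) - log P(x) of the competitor P gives P(x) <= 2^(1.5 (K(P) - K(Q))) sqrt (P(x) Q(x)).
   For fixed P and Q, sqrt (P(x) Q(x)) (P(0|x) - Q(0|x))^2 is at most four times the drop of the
   affinity sqrt (P Q) from x to its two children; the drops telescope, so summed over all x they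
   are at most the affinity 1 at the empty word. Distinct measures have distinct shortest programs,
   so the weights 2^(-1.5 K(Q)) sum to at most sum_k 2^k 2^(-1.5 k) < 4. Hence the whole sum is at
   most 16 * 2^(1.5 K(P)). The extra factor K(P) is harmless since K(P) >= 1: a prefix-free domain
   containing the empty program has no other element, yet a universal machine has many outputs. *)

section \<open>A program determines the function it computes\<close>

inductive_cases eval_ZeroE: "eval Zero xs z"
inductive_cases eval_SuccE: "eval Succ xs z"
inductive_cases eval_ProjE: "eval (Proj i) xs z"
inductive_cases eval_CompE: "eval (Comp f gs) xs z"
inductive_cases eval_PrimE: "eval (Prim f g) xs z"
inductive_cases eval_MnE: "eval (Mn f) xs z"

lemma list_all2_functional:
  assumes "list_all2 (\<lambda>g y. R g y \<and> (\<forall>z. R g z \<longrightarrow> y = z)) gs ys" and "list_all2 R gs ys'"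
  shows "ys = ys'"
  using assms
proof (induction gs arbitrary: ys ys')
  case (Cons g gs)
  then show ?case by (cases ys; cases ys') auto
qed simp

lemma eval_deterministic: "eval f xs y \<Longrightarrow> eval f xs z \<Longrightarrow> y = z"
proof (induction arbitrary: z rule: eval.induct)
  case (eval_Comp xs gs ys f z')
  from eval_Comp.prems obtain ys' where args: "list_all2 (\<lambda>g y. eval g xs y) gs ys'"
    and val: "eval f ys' z"
    by (auto elim: eval_CompE)
  have "ys = ys'"
    using list_all2_functional[of "\<lambda>g y. eval g xs y" gs ys ys'] eval_Comp.IH(1) args
    by (simp add: list_all2_conv_all_nth)
  then show ?case using eval_Comp.IH(2) val by simp
next
  case (eval_Prim0 f xs z0 g)
  from eval_Prim0.prems have "eval f xs z" by (rule eval_PrimE) auto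
  then show ?case using eval_Prim0.IH by auto
next
  case (eval_PrimS f g n xs y z0)
  from eval_PrimS.prems obtain y' where "eval (Prim f g) (n # xs) y'" and "eval g (n # y' # xs) z"
    by (rule eval_PrimE) auto
  then show ?case using eval_PrimS.IH by metis
next
  case (eval_Mn f n xs)
  from eval_Mn.prems have zero: "eval f (z # xs) 0" and below: "\<forall>m<z. \<exists>y. eval f (m # xs) (Suc y)"
    by (auto elim: eval_MnE)
  show ?case
  proof (cases n z rule: linorder_cases)
    case less
    then obtain y where "eval f (n # xs) (Suc y)" using below by auto
    then show ?thesis using eval_Mn.IH(1) by auto
  next
    case greater
    then obtain y where "eval f (z # xs) (Suc y)" "\<forall>z'. eval f (z # xs) z' \<longrightarrow> Suc y = z'"
      using eval_Mn.IH(2) by blast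
    then show ?thesis using zero by auto
  qed
qed (auto elim: eval_ZeroE eval_SuccE eval_ProjE)

lemma inj_recf_encode: "inj recf_encode"
proof (rule injI)
  show "recf_encode e = recf_encode e' \<Longrightarrow> e = e'" for e e'
  proof (induction e arbitrary: e')
    case (Comp f gs)
    then show ?case
    proof (cases e')
      case (Comp f' gs')
      with Comp.prems have "recf_encode f = recf_encode f'"
        and "map recf_encode gs = map recf_encode gs'"
        by (auto dest: inj_onD[OF inj_list_encode])
      moreover from this(2) Comp.IH(2) have "gs = gs'"
        by (induction gs arbitrary: gs') (auto simp: Cons_eq_map_conv)
      ultimately show ?thesis using Comp Comp.IH(1) by simp
    qed auto
  next
    case Zero then show ?case by (cases e') auto
  next
    case Succ then show ?case by (cases e') auto
  next
    case (Proj i) then show ?case by (cases e') auto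
  next
    case (Prim f g) then show ?case by (cases e') auto
  next
    case (Mn f) then show ?case by (cases e') auto
  qed
qed

lemma inj_rat_encode: "inj rat_encode"
proof (rule injI)
  fix a b assume "rat_encode a = rat_encode b"
  then have "fst (quotient_of a) = fst (quotient_of b)"
    and "nat (snd (quotient_of a)) = nat (snd (quotient_of b))"
    by (auto simp: rat_encode_def dest: inj_onD[OF inj_int_encode])
  moreover have "snd (quotient_of a) > 0" "snd (quotient_of b) > 0"
    using quotient_of_denom_pos' by auto
  ultimately show "a = b" by (simp add: prod_eq_iff quotient_of_inject)
qed

lemma computes_unique: "computes e Q \<Longrightarrow> computes e Q' \<Longrightarrow> Q = Q'"
  unfolding computes_def
  by (auto intro!: ext inj_onD[OF inj_rat_encode] dest: eval_deterministic)

section \<open>Optimal prefix machines and the complexity of measures\<close>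

fun recf_const :: "nat \<Rightarrow> recf" where
  "recf_const 0 = Zero"
| "recf_const (Suc v) = Comp Succ [recf_const v]"

lemma eval_recf_const_iff: "eval (recf_const v) xs y \<longleftrightarrow> y = v"
proof
  show "eval (recf_const v) xs y \<Longrightarrow> y = v"
    by (induction v arbitrary: y) (auto elim!: eval_ZeroE eval_CompE eval_SuccE simp: list_all2_Cons1)
  show "y = v \<Longrightarrow> eval (recf_const v) xs y"
    by (induction v arbitrary: y) (auto intro!: eval.intros)
qed

text \<open>The search \<open>Mn (Proj 1)\<close> on input \<open>[m]\<close> looks for the least \<open>n\<close> with \<open>m = 0\<close>,
  so it halts exactly on input \<open>0\<close>, the code of the empty string.\<close>
definition recf_const_at_zero :: "nat \<Rightarrow> recf" where
  "recf_const_at_zero v = Comp (recf_const v) [Mn (Proj 1)]"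

lemma eval_recf_const_at_zero_iff: "eval (recf_const_at_zero v) [m] y \<longleftrightarrow> m = 0 \<and> y = v"
proof
  assume "eval (recf_const_at_zero v) [m] y"
  then show "m = 0 \<and> y = v"
    unfolding recf_const_at_zero_def
    by (auto elim!: eval_CompE eval_MnE eval_ProjE simp: list_all2_Cons1 eval_recf_const_iff)
next
  assume "m = 0 \<and> y = v"
  moreover have "eval (Proj 1) [0, 0] 0"
    using eval_Proj[of 1 "[0, 0]"] by simp
  then have "eval (Mn (Proj 1)) [0] 0"
    by (intro eval_Mn) auto
  ultimately show "eval (recf_const_at_zero v) [m] y"
    unfolding recf_const_at_zero_def by (auto intro: eval_Comp simp: eval_recf_const_iff)
qed

lemma optimal_prefix_machine_simulates:
  assumes "optimal_prefix_machine U" and "prefix_machine M" and "M p = Some y"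
  shows "\<exists>q. U q = Some y"
  using assms unfolding optimal_prefix_machine_def by blast

lemma optimal_prefix_machine_outputs:
  assumes "optimal_prefix_machine U"
  obtains q where "U q = Some v"
proof -
  let ?M = "\<lambda>p. if p = [] then Some v else None"
  have "bin_encode p = 0 \<longleftrightarrow> p = []" for p
    by (cases p) auto
  then have "prefix_machine ?M"
    unfolding prefix_machine_def prefix_free_def
    by (intro conjI exI[of _ "recf_const_at_zero v"]) (auto simp: eval_recf_const_at_zero_iff)
  then show ?thesis
    using optimal_prefix_machine_simulates[OF assms, of ?M "[]" v] that by auto
qed

lemma prefix_free_Nil: "prefix_free D \<Longrightarrow> [] \<in> D \<Longrightarrow> p \<in> D \<Longrightarrow> p = []"
  unfolding prefix_free_def by (metis append.left_neutral)

lemma optimal_prefix_machine_Nil: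
  assumes "optimal_prefix_machine U"
  shows "U [] = None"
proof (rule ccontr)
  assume "U [] \<noteq> None"
  moreover obtain q0 where "U q0 = Some 0"
    by (rule optimal_prefix_machine_outputs[OF assms])
  moreover obtain q1 where "U q1 = Some 1"
    by (rule optimal_prefix_machine_outputs[OF assms])
  moreover have "prefix_free {p. U p \<noteq> None}"
    using assms unfolding optimal_prefix_machine_def prefix_machine_def by blast
  ultimately have "q0 = []" "q1 = []"
    using prefix_free_Nil[of "{p. U p \<noteq> None}"] by auto
  with \<open>U q0 = Some 0\<close> \<open>U q1 = Some 1\<close> show False by simp
qed

lemma Kmeas_attained:
  assumes "optimal_prefix_machine U" and "computable_measure Q"
  shows "\<exists>e p. computes e Q \<and> U p = Some (recf_encode e) \<and> length p = Kmeas U Q"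
proof -
  obtain e where "computes e Q"
    using assms(2) unfolding computable_measure_def by blast
  moreover obtain q where "U q = Some (recf_encode e)"
    by (rule optimal_prefix_machine_outputs[OF assms(1)])
  ultimately have "\<exists>k e p. computes e Q \<and> U p = Some (recf_encode e) \<and> length p = k"
    by blast
  then show ?thesis
    unfolding Kmeas_def by (rule LeastI_ex)
qed

lemma Kmeas_pos:
  assumes "optimal_prefix_machine U" and "computable_measure Q"
  shows "Kmeas U Q > 0"
proof -
  obtain e p where "U p = Some (recf_encode e)" and "length p = Kmeas U Q"
    using Kmeas_attained[OF assms] by blast
  with optimal_prefix_machine_Nil[OF assms(1)] show ?thesis
    by (cases p) auto
qed

definition shortest_program :: "(bool list \<Rightarrow> nat option) \<Rightarrow> (bool list \<Rightarrow> rat) \<Rightarrow> bool list" where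
  "shortest_program U Q =
     (SOME p. \<exists>e. computes e Q \<and> U p = Some (recf_encode e) \<and> length p = Kmeas U Q)"

lemma shortest_program:
  assumes "optimal_prefix_machine U" and "computable_measure Q"
  shows "\<exists>e. computes e Q \<and> U (shortest_program U Q) = Some (recf_encode e)
           \<and> length (shortest_program U Q) = Kmeas U Q"
proof -
  have "\<exists>p e. computes e Q \<and> U p = Some (recf_encode e) \<and> length p = Kmeas U Q"
    using Kmeas_attained[OF assms] by blast
  from someI_ex[OF this] show ?thesis
    unfolding shortest_program_def .
qed

lemma inj_on_shortest_program:
  assumes "optimal_prefix_machine U"
  shows "inj_on (shortest_program U) {Q. computable_measure Q}"
proof (rule inj_onI)
  fix Q1 Q2
  assume "Q1 \<in> {Q. computable_measure Q}" "Q2 \<in> {Q. computable_measure Q}"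
    and same: "shortest_program U Q1 = shortest_program U Q2"
  then obtain e1 e2 where "computes e1 Q1" "U (shortest_program U Q1) = Some (recf_encode e1)"
    and "computes e2 Q2" "U (shortest_program U Q2) = Some (recf_encode e2)"
    using shortest_program[OF assms, of Q1] shortest_program[OF assms, of Q2] by auto
  with same have "e1 = e2"
    using inj_recf_encode by (simp add: inj_eq)
  with \<open>computes e1 Q1\<close> \<open>computes e2 Q2\<close> show "Q1 = Q2"
    by (simp add: computes_unique)
qed

section \<open>Binary strings by length\<close>

lemma finite_bool_lists_length_eq: "finite {x :: bool list. length x = n}"
  using finite_lists_length_eq[of "UNIV :: bool set" n] by simp

lemma card_bool_lists_length_eq: "card {x :: bool list. length x = n} = 2 ^ n"
  using card_lists_length_eq[of "UNIV :: bool set" n] by simp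

lemma finite_bool_lists_length_less: "finite {x :: bool list. length x < n}"
  by (rule finite_subset[OF _ finite_lists_length_le[of "UNIV :: bool set" n]]) auto

lemma bool_lists_length_less_Suc:
  "{x :: bool list. length x < Suc n} = {x. length x < n} \<union> {x. length x = n}"
  by auto

lemma bool_lists_length_Suc:
  "{x :: bool list. length x = Suc n} =
     (\<lambda>x. x @ [False]) ` {x. length x = n} \<union> (\<lambda>x. x @ [True]) ` {x. length x = n}"
proof (intro set_eqI iffI)
  fix x :: "bool list"
  assume "x \<in> {x. length x = Suc n}"
  then obtain y b where "x = y @ [b]" and "length y = n"
    by (cases x rule: rev_cases) auto
  then show "x \<in> (\<lambda>x. x @ [False]) ` {x. length x = n} \<union> (\<lambda>x. x @ [True]) ` {x. length x = n}"
    by (cases b) auto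
qed auto

lemma sum_bool_lists_length_Suc:
  fixes h :: "bool list \<Rightarrow> 'a :: comm_monoid_add"
  shows "(\<Sum>x | length x = Suc n. h x) = (\<Sum>x | length x = n. h (x @ [False]) + h (x @ [True]))"
proof -
  have "inj_on (\<lambda>x. x @ [b]) A" for b :: bool and A
    by (rule inj_onI) simp
  then show ?thesis
    unfolding bool_lists_length_Suc sum.distrib
    by (subst sum.union_disjoint) (auto simp: finite_bool_lists_length_eq sum.reindex)
qed

lemma sum_bool_lists_length_less:
  fixes g :: "nat \<Rightarrow> 'a :: comm_semiring_1"
  shows "(\<Sum>x :: bool list | length x < n. g (length x)) = (\<Sum>k<n. 2 ^ k * g k)"
proof (induction n)
  case (Suc n)
  have "(\<Sum>x :: bool list | length x < Suc n. g (length x))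
      = (\<Sum>x :: bool list | length x < n. g (length x)) + (\<Sum>x :: bool list | length x = n. g (length x))"
    unfolding bool_lists_length_less_Suc
    by (rule sum.union_disjoint) (auto simp: finite_bool_lists_length_eq finite_bool_lists_length_less)
  also have "(\<Sum>x :: bool list | length x = n. g (length x)) = 2 ^ n * g n"
    by (simp add: card_bool_lists_length_eq)
  finally show ?case
    using Suc.IH by simp
qed simp

text \<open>Since \<open>2 ^ k * 2 powr (-1.5 * k) = (1 / sqrt 2) ^ k\<close>, the bound is the geometric series
  \<open>1 / (1 - 1 / sqrt 2) = 2 + sqrt 2\<close>.\<close>
lemma sum_inj_code_weights_le:
  assumes "finite S" and "inj_on c S"
  shows "(\<Sum>s\<in>S. 2 powr (-1.5 * real (length (c s :: bool list)))) \<le> 4"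
proof -
  define r :: real where "r = 2 powr (-0.5)"
  have "r > 0"
    unfolding r_def by simp
  have "r = inverse (sqrt 2)"
    unfolding r_def using powr_half_sqrt[of 2] by (simp add: powr_minus)
  also have "\<dots> \<le> inverse (4/3)"
  proof (rule le_imp_inverse_le)
    show "4/3 \<le> sqrt (2 :: real)"
      by (rule real_le_rsqrt) (simp add: power2_eq_square)
  qed simp
  finally have "r \<le> 3/4"
    by simp
  have weight: "2 ^ k * 2 powr (-1.5 * real k) = r ^ k" for k :: nat
  proof -
    have "(2 :: real) ^ k * 2 powr (-1.5 * real k) = 2 powr (-0.5 * real k)"
      by (simp add: powr_realpow[symmetric] powr_add[symmetric])
    also have "\<dots> = r ^ k"
      unfolding r_def using powr_powr[of 2 "-0.5" "real k"] by (simp add: powr_realpow)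
    finally show ?thesis .
  qed
  define n where "n = Suc (Max (insert 0 (length ` c ` S)))"
  have "(\<Sum>s\<in>S. 2 powr (-1.5 * real (length (c s)))) = (\<Sum>p\<in>c ` S. 2 powr (-1.5 * real (length p)))"
    using assms(2) by (simp add: sum.reindex)
  also have "\<dots> \<le> (\<Sum>p :: bool list | length p < n. 2 powr (-1.5 * real (length p)))"
    using assms(1) by (intro sum_mono2) (auto simp: finite_bool_lists_length_less n_def le_imp_less_Suc)
  also have "\<dots> = (\<Sum>k<n. r ^ k)"
    unfolding sum_bool_lists_length_less[of "\<lambda>k. 2 powr (-1.5 * real k)"] weight ..
  also have "\<dots> = (1 - r ^ n) / (1 - r)"
    using \<open>r \<le> 3/4\<close> by (simp add: sum_gp_strict)
  also have "\<dots> \<le> 1 / (1 - r)"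
    using \<open>r > 0\<close> \<open>r \<le> 3/4\<close> by (intro divide_right_mono) auto
  also have "\<dots> \<le> 4"
    using \<open>r \<le> 3/4\<close> by (simp add: field_simps)
  finally show ?thesis .
qed

lemma sum_Kmeas_weights_le:
  assumes "optimal_prefix_machine U" and "finite S" and "\<forall>Q\<in>S. computable_measure Q"
  shows "(\<Sum>Q\<in>S. 2 powr (-1.5 * real (Kmeas U Q))) \<le> 4"
proof -
  have "inj_on (shortest_program U) S"
    using inj_on_shortest_program[OF assms(1)] by (rule inj_on_subset) (use assms(3) in auto)
  with assms(2) have "(\<Sum>Q\<in>S. 2 powr (-1.5 * real (length (shortest_program U Q)))) \<le> 4"
    by (rule sum_inj_code_weights_le)
  moreover have "length (shortest_program U Q) = Kmeas U Q" if "Q \<in> S" for Q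
    using shortest_program[OF assms(1)] assms(3) that by blast
  ultimately show ?thesis
    by simp
qed

section \<open>Affinity of two measures on the binary tree\<close>

definition tree_measure :: "(bool list \<Rightarrow> real) \<Rightarrow> bool" where
  "tree_measure p \<longleftrightarrow> (\<forall>x. 0 \<le> p x) \<and> (\<forall>x. p (x @ [False]) + p (x @ [True]) = p x)"

lemma tree_measure_real_of_rat:
  "is_measure P \<Longrightarrow> tree_measure (\<lambda>x. real_of_rat (P x))"
  unfolding is_measure_def tree_measure_def by (simp flip: of_rat_add)

lemma tree_measure_nonneg: "tree_measure p \<Longrightarrow> 0 \<le> p x"
  unfolding tree_measure_def by blast

lemma tree_measure_split: "tree_measure p \<Longrightarrow> p (x @ [False]) + p (x @ [True]) = p x"
  unfolding tree_measure_def by blast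

lemma tree_measure_children_eq_0:
  assumes "tree_measure p" and "p x = 0"
  shows "p (x @ [False]) = 0" and "p (x @ [True]) = 0"
  using tree_measure_split[OF assms(1), of x] tree_measure_nonneg[OF assms(1), of "x @ [False]"]
    tree_measure_nonneg[OF assms(1), of "x @ [True]"] assms(2)
  by linarith+

definition affinity :: "(bool list \<Rightarrow> real) \<Rightarrow> (bool list \<Rightarrow> real) \<Rightarrow> bool list \<Rightarrow> real" where
  "affinity p q x = sqrt (p x * q x)"

definition affinity_loss :: "(bool list \<Rightarrow> real) \<Rightarrow> (bool list \<Rightarrow> real) \<Rightarrow> bool list \<Rightarrow> real" where
  "affinity_loss p q x = affinity p q x - affinity p q (x @ [False]) - affinity p q (x @ [True])"

lemma diff_squares_squared_le:
  fixes u v :: real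
  assumes "0 \<le> u" "u \<le> 1" "0 \<le> v" "v \<le> 1"
  shows "(u\<^sup>2 - v\<^sup>2)\<^sup>2 \<le> 4 * (u - v)\<^sup>2"
proof -
  have "(u + v)\<^sup>2 \<le> 2\<^sup>2"
    using assms by (intro power_mono) auto
  then have "(u - v)\<^sup>2 * (u + v)\<^sup>2 \<le> (u - v)\<^sup>2 * 4"
    by (intro mult_left_mono) auto
  moreover have "(u\<^sup>2 - v\<^sup>2)\<^sup>2 = (u - v)\<^sup>2 * (u + v)\<^sup>2"
    by (simp add: power2_eq_square algebra_simps)
  ultimately show ?thesis
    by simp
qed

lemma unit_vectors_diff_squares_le:
  fixes s t s' t' :: real
  assumes "0 \<le> s" "0 \<le> t" "0 \<le> s'" "0 \<le> t'" and "s\<^sup>2 + t\<^sup>2 = 1" "s'\<^sup>2 + t'\<^sup>2 = 1"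
  shows "(s\<^sup>2 - s'\<^sup>2)\<^sup>2 \<le> 4 * (1 - s * s' - t * t')"
proof -
  have "s\<^sup>2 \<le> 1" "t\<^sup>2 \<le> 1" "s'\<^sup>2 \<le> 1" "t'\<^sup>2 \<le> 1"
    using assms(5,6) zero_le_power2[of s] zero_le_power2[of t] zero_le_power2[of s']
      zero_le_power2[of t'] by linarith+
  then have le1: "s \<le> 1" "t \<le> 1" "s' \<le> 1" "t' \<le> 1"
    using assms(1-4) by (simp_all add: power_le_one_iff)
  have swap: "(s\<^sup>2 - s'\<^sup>2)\<^sup>2 = (t\<^sup>2 - t'\<^sup>2)\<^sup>2"
  proof -
    have "s\<^sup>2 - s'\<^sup>2 = t'\<^sup>2 - t\<^sup>2"
      using assms(5,6) by linarith
    then show ?thesis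
      by (simp add: power2_commute)
  qed
  have "(s\<^sup>2 - s'\<^sup>2)\<^sup>2 \<le> 4 * (s - s')\<^sup>2"
    using assms le1 by (intro diff_squares_squared_le) auto
  moreover have "(t\<^sup>2 - t'\<^sup>2)\<^sup>2 \<le> 4 * (t - t')\<^sup>2"
    using assms le1 by (intro diff_squares_squared_le) auto
  moreover have "(s - s')\<^sup>2 + (t - t')\<^sup>2 = 2 * (1 - s * s' - t * t')"
    using assms(5,6) by (simp add: power2_eq_square algebra_simps)
  ultimately show ?thesis
    using swap by linarith
qed

text \<open>With \<open>s = sqrt (p (x @ [False]) / p x)\<close>, \<open>t = sqrt (p (x @ [True]) / p x)\<close> and \<open>s'\<close>, \<open>t'\<close>
  defined likewise from \<open>q\<close>, the loss is \<open>affinity p q x * (1 - s * s' - t * t')\<close>.\<close>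
lemma cond_diff_le_affinity_loss:
  assumes p: "tree_measure p" and q: "tree_measure q" and pos: "p x > 0" "q x > 0"
  shows "affinity p q x * (p (x @ [False]) / p x - q (x @ [False]) / q x)\<^sup>2 \<le> 4 * affinity_loss p q x"
proof -
  define s where "s = sqrt (p (x @ [False]) / p x)"
  define t where "t = sqrt (p (x @ [True]) / p x)"
  define s' where "s' = sqrt (q (x @ [False]) / q x)"
  define t' where "t' = sqrt (q (x @ [True]) / q x)"
  note nonneg = tree_measure_nonneg[OF p] tree_measure_nonneg[OF q]
  have sq: "s\<^sup>2 = p (x @ [False]) / p x" "t\<^sup>2 = p (x @ [True]) / p x"
    "s'\<^sup>2 = q (x @ [False]) / q x" "t'\<^sup>2 = q (x @ [True]) / q x"
    unfolding s_def t_def s'_def t'_def using nonneg pos by simp_all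
  have "s\<^sup>2 + t\<^sup>2 = 1" "s'\<^sup>2 + t'\<^sup>2 = 1"
    unfolding sq using tree_measure_split[OF p, of x] tree_measure_split[OF q, of x] pos
    by (simp_all add: add_divide_distrib[symmetric])
  then have core: "(s\<^sup>2 - s'\<^sup>2)\<^sup>2 \<le> 4 * (1 - s * s' - t * t')"
    using nonneg pos
    by (intro unit_vectors_diff_squares_le) (simp_all add: s_def t_def s'_def t'_def)
  have "affinity p q (x @ [False]) = affinity p q x * (s * s')"
    and "affinity p q (x @ [True]) = affinity p q x * (t * t')"
    unfolding affinity_def s_def t_def s'_def t'_def using nonneg pos
    by (simp_all add: real_sqrt_mult[symmetric] field_simps)
  then have loss: "affinity_loss p q x = affinity p q x * (1 - s * s' - t * t')"
    unfolding affinity_loss_def by (simp add: algebra_simps)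
  have "affinity p q x * (p (x @ [False]) / p x - q (x @ [False]) / q x)\<^sup>2
      = affinity p q x * (s\<^sup>2 - s'\<^sup>2)\<^sup>2"
    by (simp add: sq)
  also have "\<dots> \<le> affinity p q x * (4 * (1 - s * s' - t * t'))"
    using nonneg by (intro mult_left_mono[OF core]) (simp add: affinity_def)
  also have "\<dots> = 4 * affinity_loss p q x"
    by (simp add: loss)
  finally show ?thesis .
qed

lemma affinity_loss_nonneg:
  assumes p: "tree_measure p" and q: "tree_measure q"
  shows "affinity_loss p q x \<ge> 0"
proof (cases "p x = 0 \<or> q x = 0")
  case True
  then show ?thesis
    using tree_measure_children_eq_0[OF p] tree_measure_children_eq_0[OF q]
    unfolding affinity_loss_def affinity_def by auto
next
  case False
  then have "p x > 0" "q x > 0"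
    using tree_measure_nonneg[OF p, of x] tree_measure_nonneg[OF q, of x] by auto
  then have "0 \<le> affinity p q x * (p (x @ [False]) / p x - q (x @ [False]) / q x)\<^sup>2"
    unfolding affinity_def by simp
  also have "\<dots> \<le> 4 * affinity_loss p q x"
    using cond_diff_le_affinity_loss[OF p q \<open>p x > 0\<close> \<open>q x > 0\<close>] .
  finally show ?thesis
    by simp
qed

lemma sum_affinity_loss_telescope:
  "(\<Sum>x | length x < n. affinity_loss p q x) + (\<Sum>x | length x = n. affinity p q x) = affinity p q []"
proof (induction n)
  case 0
  have "{x :: bool list. length x = 0} = {[]}"
    by auto
  then show ?case
    by simp
next
  case (Suc n)
  have "(\<Sum>x | length x < Suc n. affinity_loss p q x)
      = (\<Sum>x | length x < n. affinity_loss p q x) + (\<Sum>x | length x = n. affinity_loss p q x)"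
    unfolding bool_lists_length_less_Suc
    by (rule sum.union_disjoint) (auto simp: finite_bool_lists_length_eq finite_bool_lists_length_less)
  moreover have "(\<Sum>x | length x = n. affinity_loss p q x) + (\<Sum>x | length x = Suc n. affinity p q x)
      = (\<Sum>x | length x = n. affinity p q x)"
    unfolding sum_bool_lists_length_Suc affinity_loss_def by (simp add: sum_subtractf sum.distrib)
  ultimately show ?case
    using Suc.IH by linarith
qed

lemma sum_affinity_loss_le:
  assumes p: "tree_measure p" and q: "tree_measure q" and "finite F"
  shows "(\<Sum>x\<in>F. affinity_loss p q x) \<le> affinity p q []"
proof -
  define n where "n = Suc (Max (insert 0 (length ` F)))"
  have "F \<subseteq> {x. length x < n}"
    using \<open>finite F\<close> unfolding n_def by (auto simp: le_imp_less_Suc)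
  then have "(\<Sum>x\<in>F. affinity_loss p q x) \<le> (\<Sum>x | length x < n. affinity_loss p q x)"
    by (intro sum_mono2) (auto simp: finite_bool_lists_length_less affinity_loss_nonneg[OF p q])
  also have "\<dots> \<le> affinity p q []"
  proof -
    have "0 \<le> (\<Sum>x | length x = n. affinity p q x)"
      using tree_measure_nonneg[OF p] tree_measure_nonneg[OF q]
      by (intro sum_nonneg) (simp add: affinity_def)
    then show ?thesis
      using sum_affinity_loss_telescope[of p q n] by linarith
  qed
  finally show ?thesis .
qed

lemma sum_cond_diff_le_affinity:
  assumes p: "tree_measure p" and q: "tree_measure q" and "finite F"
    and pos: "\<And>x. x \<in> F \<Longrightarrow> p x > 0 \<and> q x > 0"
  shows "(\<Sum>x\<in>F. affinity p q x * (p (x @ [False]) / p x - q (x @ [False]) / q x)\<^sup>2)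
           \<le> 4 * affinity p q []"
proof -
  have "(\<Sum>x\<in>F. affinity p q x * (p (x @ [False]) / p x - q (x @ [False]) / q x)\<^sup>2)
      \<le> (\<Sum>x\<in>F. 4 * affinity_loss p q x)"
    using cond_diff_le_affinity_loss[OF p q] pos by (intro sum_mono) auto
  also have "\<dots> \<le> 4 * affinity p q []"
    using sum_affinity_loss_le[OF p q \<open>finite F\<close>] by (simp add: sum_distrib_left[symmetric])
  finally show ?thesis .
qed

lemma sum_cond0_diff_le:
  assumes P: "is_measure P" and Q: "is_measure Q" and "finite F"
    and pos: "\<And>x. x \<in> F \<Longrightarrow> P x > 0 \<and> Q x > 0"
  shows "(\<Sum>x\<in>F. sqrt (real_of_rat (P x) * real_of_rat (Q x)) * (cond0 P x - cond0 Q x)\<^sup>2) \<le> 4"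
proof -
  have "real_of_rat (P []) = 1" "real_of_rat (Q []) = 1"
    using P Q unfolding is_measure_def by simp_all
  then show ?thesis
    using sum_cond_diff_le_affinity[OF tree_measure_real_of_rat[OF P] tree_measure_real_of_rat[OF Q]
        \<open>finite F\<close>] pos
    by (simp add: affinity_def cond0_def)
qed

section \<open>Prediction errors of best explanations\<close>

lemma best_explanation_dominates:
  assumes "best_explanation U x Q" and "computable_measure P" and "P x > 0"
  shows "real_of_rat (P x)
           \<le> 2 powr (1.5 * (real (Kmeas U P) - real (Kmeas U Q)))
               * sqrt (real_of_rat (P x) * real_of_rat (Q x))"
proof -
  define p q t where "p = real_of_rat (P x)" and "q = real_of_rat (Q x)"
    and "t = 2 powr (1.5 * (real (Kmeas U P) - real (Kmeas U Q)))"
  have "p > 0" "q > 0" "t > 0"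
    using assms unfolding best_explanation_def p_def q_def t_def by simp_all
  have "3 * real (Kmeas U Q) - log 2 q \<le> 3 * real (Kmeas U P) - log 2 p"
    using assms unfolding best_explanation_def p_def q_def by blast
  then have "log 2 (p / q) \<le> 3 * (real (Kmeas U P) - real (Kmeas U Q))"
    using \<open>p > 0\<close> \<open>q > 0\<close> by (simp add: log_divide)
  then have "p / q \<le> 2 powr (3 * (real (Kmeas U P) - real (Kmeas U Q)))"
    using \<open>p > 0\<close> \<open>q > 0\<close> by (simp add: log_le_iff)
  also have "\<dots> = t\<^sup>2"
    unfolding t_def power2_eq_square powr_add[symmetric] by simp
  finally have "p \<le> q * t\<^sup>2"
    using \<open>q > 0\<close> by (simp add: divide_le_eq mult.commute)
  then have "p * p \<le> p * (q * t\<^sup>2)"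
    using \<open>p > 0\<close> by (intro mult_left_mono) auto
  then have "p\<^sup>2 \<le> (p * q) * t\<^sup>2"
    by (simp add: power2_eq_square mult.assoc)
  then have "p \<le> sqrt ((p * q) * t\<^sup>2)"
    by (rule real_le_rsqrt)
  also have "\<dots> = t * sqrt (p * q)"
    using \<open>t > 0\<close> by (simp add: real_sqrt_mult)
  finally show ?thesis
    unfolding p_def q_def t_def .
qed

definition prediction_error :: "(bool list \<Rightarrow> rat) \<Rightarrow> (bool list \<Rightarrow> bool list \<Rightarrow> rat) \<Rightarrow> bool list \<Rightarrow> real" where
  "prediction_error P Qs x =
     (if P x = 0 then 0 else real_of_rat (P x) * (cond0 P x - pred0 Qs x)\<^sup>2)"

lemma prediction_error_nonneg: "is_measure P \<Longrightarrow> prediction_error P Qs x \<ge> 0"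
  unfolding prediction_error_def is_measure_def by simp

lemma prediction_error_le:
  assumes "best_explanation U x (Qs x)" and "computable_measure P" and "P x > 0"
  shows "prediction_error P Qs x
           \<le> 2 powr (1.5 * real (Kmeas U P)) * (2 powr (-1.5 * real (Kmeas U (Qs x)))
               * (sqrt (real_of_rat (P x) * real_of_rat (Qs x x)) * (cond0 P x - cond0 (Qs x) x)\<^sup>2))"
proof -
  have "pred0 Qs x = cond0 (Qs x) x"
    unfolding pred0_def cond0_def ..
  then have "prediction_error P Qs x = real_of_rat (P x) * (cond0 P x - cond0 (Qs x) x)\<^sup>2"
    using assms(3) unfolding prediction_error_def by simp
  also have "\<dots> \<le> 2 powr (1.5 * (real (Kmeas U P) - real (Kmeas U (Qs x))))
      * sqrt (real_of_rat (P x) * real_of_rat (Qs x x)) * (cond0 P x - cond0 (Qs x) x)\<^sup>2"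
    using best_explanation_dominates[OF assms] by (intro mult_right_mono) simp_all
  also have "2 powr (1.5 * (real (Kmeas U P) - real (Kmeas U (Qs x))))
      = 2 powr (1.5 * real (Kmeas U P)) * 2 powr (-1.5 * real (Kmeas U (Qs x)))"
    unfolding powr_add[symmetric] by (simp add: algebra_simps)
  finally show ?thesis
    by (simp add: mult.assoc)
qed

lemma sum_prediction_error_le:
  assumes U: "optimal_prefix_machine U" and P: "computable_measure P"
    and Qs: "\<forall>x. best_explanation U x (Qs x)" and "finite F"
  shows "(\<Sum>x\<in>F. prediction_error P Qs x) \<le> 16 * 2 powr (1.5 * real (Kmeas U P))"
proof -
  define W where "W Q = 2 powr (-1.5 * real (Kmeas U Q))" for Q
  define T where "T Q x = sqrt (real_of_rat (P x) * real_of_rat (Q x)) * (cond0 P x - cond0 Q x)\<^sup>2"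
    for Q x
  define F' where "F' = {x\<in>F. P x \<noteq> 0}"
  have "finite F'"
    using \<open>finite F\<close> unfolding F'_def by simp
  have Pm: "is_measure P"
    using P unfolding computable_measure_def by blast
  have best: "computable_measure (Qs x)" "Qs x x > 0" for x
    using Qs unfolding best_explanation_def by auto
  have pos: "P x > 0 \<and> Qs x x > 0" if "x \<in> F'" for x
    using that Pm best(2)[of x] unfolding F'_def is_measure_def by (auto simp: order.strict_iff_order)
  have "(\<Sum>x\<in>F. prediction_error P Qs x) = (\<Sum>x\<in>F'. prediction_error P Qs x)"
    unfolding F'_def using \<open>finite F\<close> by (intro sum.mono_neutral_right) (auto simp: prediction_error_def)
  also have "\<dots> \<le> (\<Sum>x\<in>F'. 2 powr (1.5 * real (Kmeas U P)) * (W (Qs x) * T (Qs x) x))"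
  proof (rule sum_mono)
    fix x assume "x \<in> F'"
    then show "prediction_error P Qs x \<le> 2 powr (1.5 * real (Kmeas U P)) * (W (Qs x) * T (Qs x) x)"
      unfolding W_def T_def using pos by (intro prediction_error_le[OF Qs[rule_format] P]) blast
  qed
  also have "\<dots> = 2 powr (1.5 * real (Kmeas U P))
      * (\<Sum>Q\<in>Qs ` F'. \<Sum>x | x \<in> F' \<and> Qs x = Q. W (Qs x) * T (Qs x) x)"
    unfolding sum_distrib_left[symmetric]
      sum.image_gen[OF \<open>finite F'\<close>, of "\<lambda>x. W (Qs x) * T (Qs x) x" Qs] ..
  also have "\<dots> = 2 powr (1.5 * real (Kmeas U P))
      * (\<Sum>Q\<in>Qs ` F'. W Q * (\<Sum>x | x \<in> F' \<and> Qs x = Q. T Q x))"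
    by (simp add: sum_distrib_left)
  also have "\<dots> \<le> 2 powr (1.5 * real (Kmeas U P)) * (\<Sum>Q\<in>Qs ` F'. W Q * 4)"
  proof (intro mult_left_mono sum_mono)
    fix Q assume "Q \<in> Qs ` F'"
    then have "is_measure Q"
      using best(1) unfolding computable_measure_def by blast
    then show "(\<Sum>x | x \<in> F' \<and> Qs x = Q. T Q x) \<le> 4"
      unfolding T_def using Pm pos \<open>finite F'\<close> by (intro sum_cond0_diff_le) auto
  qed (simp_all add: W_def)
  also have "\<dots> \<le> 2 powr (1.5 * real (Kmeas U P)) * 16"
    using sum_Kmeas_weights_le[OF U finite_imageI[OF \<open>finite F'\<close>]] best(1)
    by (simp add: W_def sum_distrib_right[symmetric])
  finally show ?thesis
    by simp
qed

theorem theorem3: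
  assumes "optimal_prefix_machine U"
  shows "\<exists>c::real. \<forall>P Qs.
     computable_measure P \<and> (\<forall>x. best_explanation U x (Qs x)) \<longrightarrow>
       (let f = (\<lambda>x. if P x = 0 then 0
                     else real_of_rat (P x) * (cond0 P x - pred0 Qs x)\<^sup>2)
        in f summable_on UNIV \<and>
           infsum f UNIV \<le> c * real (Kmeas U P) * 2 powr (1.5 * real (Kmeas U P)))"
proof (intro exI[of _ 16] allI impI, unfold Let_def prediction_error_def[symmetric])
  fix P Qs
  assume hyps: "computable_measure P \<and> (\<forall>x. best_explanation U x (Qs x))"
  let ?B = "16 * 2 powr (1.5 * real (Kmeas U P))"
  have finite_sums: "sum (prediction_error P Qs) F \<le> ?B" if "finite F" for F
    using sum_prediction_error_le[OF assms _ _ that] hyps by blast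
  have nonneg: "prediction_error P Qs x \<ge> 0" for x
    using hyps prediction_error_nonneg unfolding computable_measure_def by blast
  have summable: "prediction_error P Qs summable_on UNIV"
    using finite_sums nonneg by (intro nonneg_bdd_above_summable_on bdd_aboveI) auto
  have "infsum (prediction_error P Qs) UNIV \<le> ?B"
    using summable finite_sums by (rule infsum_le_finite_sums)
  also have "\<dots> \<le> 16 * real (Kmeas U P) * 2 powr (1.5 * real (Kmeas U P))"
    using Kmeas_pos[OF assms] hyps by (simp add: Suc_le_eq)
  finally show "prediction_error P Qs summable_on UNIV
      \<and> infsum (prediction_error P Qs) UNIV \<le> 16 * real (Kmeas U P) * 2 powr (1.5 * real (Kmeas U P))"
    using summable by simp
qed

end
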